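(* Let $E=E(R/\mathfrak m)$ and $N^\circ=\mathrm{Hom}_R(N,E)$ for an $R$-module $N$. Then: (a) if $N^\circ$ is strongly prime, then $N$ is strongly coprime; (b) if $N^\circ$ is strongly coprime, then $N$ is strongly prime; (c) if $N$ is reflexive (the canonical map $N\to N^{\circ\circ}$ is an isomorphism), the converses of (a) and (b) hold as well.
   Context: $R$ is a commutative Noetherian local ring with maximal ideal $\mathfrak m$, $E(R/\mathfrak m)$ the injective hull of $R/\mathfrak m$. A module $M\ne0$ is strongly prime if every nonzero $R$-endomorphism of $M$ is injective; a module $N\neq0$ is strongly coprime if every nonzero $R$-endomorphism of $N$ is surjective. *)

theory Defs
  imports "HOL-Algebra.Module" "HOL-Algebra.Ring_Divisibility"
begin

definition noeth_local_ring :: "'r ring \<Rightarrow> 'r set \<Rightarrow> bool" where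
  "noeth_local_ring R m \<longleftrightarrow> cring R \<and> noetherian_ring R \<and> maximalideal m R \<and>
     (\<forall>I. maximalideal I R \<longrightarrow> I = m)"

definition lin_map :: "'r ring \<Rightarrow> ('r, 'a) module \<Rightarrow> ('r, 'b) module \<Rightarrow> ('a \<Rightarrow> 'b) \<Rightarrow> bool" where
  "lin_map R M N f \<longleftrightarrow> f \<in> carrier M \<rightarrow> carrier N \<and>
     (\<forall>x\<in>carrier M. \<forall>y\<in>carrier M. f (x \<oplus>\<^bsub>M\<^esub> y) = f x \<oplus>\<^bsub>N\<^esub> f y) \<and>
     (\<forall>r\<in>carrier R. \<forall>x\<in>carrier M. f (r \<odot>\<^bsub>M\<^esub> x) = r \<odot>\<^bsub>N\<^esub> f x)"

definition Hom_mod :: "'r ring \<Rightarrow> ('r, 'a) module \<Rightarrow> ('r, 'b) module \<Rightarrow> ('r, 'a \<Rightarrow> 'b) module" where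
  "Hom_mod R M N = \<lparr>carrier = {f. lin_map R M N f \<and> f \<in> extensional (carrier M)},
     mult = (\<lambda>f g. undefined), one = undefined,
     zero = (\<lambda>x\<in>carrier M. \<zero>\<^bsub>N\<^esub>),
     add = (\<lambda>f g. \<lambda>x\<in>carrier M. f x \<oplus>\<^bsub>N\<^esub> g x),
     smult = (\<lambda>r f. \<lambda>x\<in>carrier M. r \<odot>\<^bsub>N\<^esub> f x)\<rparr>"

definition strongly_prime :: "'r ring \<Rightarrow> ('r, 'a) module \<Rightarrow> bool" where
  "strongly_prime R M \<longleftrightarrow> carrier M \<noteq> {\<zero>\<^bsub>M\<^esub>} \<and>
     (\<forall>f. lin_map R M M f \<and> (\<exists>x\<in>carrier M. f x \<noteq> \<zero>\<^bsub>M\<^esub>) \<longrightarrow> inj_on f (carrier M))"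

definition strongly_coprime :: "'r ring \<Rightarrow> ('r, 'a) module \<Rightarrow> bool" where
  "strongly_coprime R M \<longleftrightarrow> carrier M \<noteq> {\<zero>\<^bsub>M\<^esub>} \<and>
     (\<forall>f. lin_map R M M f \<and> (\<exists>x\<in>carrier M. f x \<noteq> \<zero>\<^bsub>M\<^esub>) \<longrightarrow> f ` carrier M = carrier M)"

text \<open>Injectivity of E, tested against all modules whose carrier lives in type 'c.\<close>
definition injective_wrt :: "'c itself \<Rightarrow> 'r ring \<Rightarrow> ('r, 'e) module \<Rightarrow> bool" where
  "injective_wrt (TYPE('c)) R E \<longleftrightarrow>
     (\<forall>(B :: ('r, 'c) module) A h. module R B \<and> submodule A R B \<and> lin_map R (B\<lparr>carrier := A\<rparr>) E h
        \<longrightarrow> (\<exists>g. lin_map R B E g \<and> (\<forall>x\<in>A. g x = h x)))"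

text \<open>E contains an essential submodule R e isomorphic to R/m (i.e. ann(e) = m).\<close>
definition essential_ext_of_residue :: "'r ring \<Rightarrow> 'r set \<Rightarrow> ('r, 'e) module \<Rightarrow> bool" where
  "essential_ext_of_residue R m E \<longleftrightarrow> module R E \<and>
     (\<exists>e\<in>carrier E. {r \<in> carrier R. r \<odot>\<^bsub>E\<^esub> e = \<zero>\<^bsub>E\<^esub>} = m \<and>
        (\<forall>U. submodule U R E \<and> U \<noteq> {\<zero>\<^bsub>E\<^esub>} \<longrightarrow>
           (\<exists>u\<in>U. u \<noteq> \<zero>\<^bsub>E\<^esub> \<and> (\<exists>r\<in>carrier R. u = r \<odot>\<^bsub>E\<^esub> e))))"

definition eval_map :: "'r ring \<Rightarrow> ('r, 'e) module \<Rightarrow> ('r, 'n) module \<Rightarrow> 'n \<Rightarrow> ('n \<Rightarrow> 'e) \<Rightarrow> 'e" where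
  "eval_map R E N x = (\<lambda>g\<in>carrier (Hom_mod R N E). g x)"

definition reflexive_wrt :: "'r ring \<Rightarrow> ('r, 'e) module \<Rightarrow> ('r, 'n) module \<Rightarrow> bool" where
  "reflexive_wrt R E N \<longleftrightarrow>
     lin_map R N (Hom_mod R (Hom_mod R N E) E) (eval_map R E N) \<and>
     bij_betw (eval_map R E N) (carrier N) (carrier (Hom_mod R (Hom_mod R N E) E))"

end

theory Submission
  imports Defs
begin

text \<open>
  The point is that \<open>E\<close> is an injective cogenerator: given a submodule \<open>S\<close> of \<open>M\<close> and
  \<open>y \<notin> S\<close>, the assignment \<open>z + r y \<mapsto> r e\<close> on \<open>S + R y\<close> is well defined because
  \<open>(S : y) \<subseteq> m = ann e\<close>, and injectivity extends it to some \<open>g : M \<rightarrow> E\<close> killing \<open>S\<close> with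
  \<open>g y \<noteq> 0\<close>. Consequently the dual \<open>g \<mapsto> g \<circ> f\<close> of a nonzero endomorphism \<open>f\<close> is nonzero; if
  \<open>f\<close> is not surjective, a nonzero \<open>g\<close> killing its image shows that the dual is not injective,
  and if \<open>f d = 0\<close> with \<open>d \<noteq> 0\<close>, a \<open>g\<close> with \<open>g d \<noteq> 0\<close> is not of the form \<open>h \<circ> f\<close>, so the dual
  is not surjective. For reflexive \<open>N\<close> the converses follow by applying this to the dual of
  \<open>N\<close> and transporting along \<open>N \<cong> N\<^sup>\<circ>\<^sup>\<circ>\<close>.
\<close>

section \<open>Linear maps and Hom modules\<close>

lemma lin_map_closed: "lin_map R M N f \<Longrightarrow> x \<in> carrier M \<Longrightarrow> f x \<in> carrier N"
  unfolding lin_map_def by auto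

lemma lin_map_add:
  "lin_map R M N f \<Longrightarrow> x \<in> carrier M \<Longrightarrow> y \<in> carrier M \<Longrightarrow> f (x \<oplus>\<^bsub>M\<^esub> y) = f x \<oplus>\<^bsub>N\<^esub> f y"
  unfolding lin_map_def by auto

lemma lin_map_smult:
  "lin_map R M N f \<Longrightarrow> r \<in> carrier R \<Longrightarrow> x \<in> carrier M \<Longrightarrow> f (r \<odot>\<^bsub>M\<^esub> x) = r \<odot>\<^bsub>N\<^esub> f x"
  unfolding lin_map_def by auto

lemma lin_mapI:
  assumes "\<And>x. x \<in> carrier M \<Longrightarrow> f x \<in> carrier N"
    and "\<And>x y. x \<in> carrier M \<Longrightarrow> y \<in> carrier M \<Longrightarrow> f (x \<oplus>\<^bsub>M\<^esub> y) = f x \<oplus>\<^bsub>N\<^esub> f y"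
    and "\<And>r x. r \<in> carrier R \<Longrightarrow> x \<in> carrier M \<Longrightarrow> f (r \<odot>\<^bsub>M\<^esub> x) = r \<odot>\<^bsub>N\<^esub> f x"
  shows "lin_map R M N f"
  unfolding lin_map_def using assms by auto

lemma lin_map_zero:
  assumes "module R M" "module R N" "lin_map R M N f"
  shows "f \<zero>\<^bsub>M\<^esub> = \<zero>\<^bsub>N\<^esub>"
proof -
  interpret M: module R M by fact
  interpret N: module R N by fact
  have "f \<zero>\<^bsub>M\<^esub> = \<zero>\<^bsub>R\<^esub> \<odot>\<^bsub>N\<^esub> f \<zero>\<^bsub>M\<^esub>"
    using lin_map_smult[OF assms(3), of "\<zero>\<^bsub>R\<^esub>" "\<zero>\<^bsub>M\<^esub>"] by simp
  then show ?thesis using lin_map_closed[OF assms(3)] by simp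
qed

lemma lin_map_neg:
  assumes "module R M" "module R N" "lin_map R M N f" "x \<in> carrier M"
  shows "f (\<ominus>\<^bsub>M\<^esub> x) = \<ominus>\<^bsub>N\<^esub> f x"
proof -
  interpret M: module R M by fact
  interpret N: module R N by fact
  have "f (\<ominus>\<^bsub>M\<^esub> x) = f ((\<ominus>\<^bsub>R\<^esub> \<one>\<^bsub>R\<^esub>) \<odot>\<^bsub>M\<^esub> x)"
    using assms(4) by (simp add: M.smult_l_minus)
  also have "\<dots> = \<ominus>\<^bsub>N\<^esub> f x"
    using assms lin_map_smult[OF assms(3)] lin_map_closed[OF assms(3)] by (simp add: N.smult_l_minus)
  finally show ?thesis .
qed

lemma lin_map_comp:
  "lin_map R M N f \<Longrightarrow> lin_map R N P g \<Longrightarrow> lin_map R M P (g \<circ> f)"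
  unfolding lin_map_def by (auto simp: Pi_def)

lemma lin_map_inv_into:
  assumes "module R M" and "lin_map R M N f" and "bij_betw f (carrier M) (carrier N)"
  shows "lin_map R N M (inv_into (carrier M) f)"
proof -
  interpret M: module R M by fact
  let ?g = "inv_into (carrier M) f"
  have g_closed: "?g y \<in> carrier M" and f_g: "f (?g y) = y" if "y \<in> carrier N" for y
    using that assms(3) by (auto simp: bij_betw_def inv_into_into f_inv_into_f)
  have g_f: "?g (f x) = x" if "x \<in> carrier M" for x
    using that assms(3) by (simp add: bij_betw_def)
  show ?thesis
  proof (rule lin_mapI)
    fix x y assume "x \<in> carrier N" "y \<in> carrier N"
    then show "?g (x \<oplus>\<^bsub>N\<^esub> y) = ?g x \<oplus>\<^bsub>M\<^esub> ?g y"
      using g_f[of "?g x \<oplus>\<^bsub>M\<^esub> ?g y"] lin_map_add[OF assms(2)] g_closed f_g by simp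
  next
    fix r x assume "r \<in> carrier R" "x \<in> carrier N"
    then show "?g (r \<odot>\<^bsub>N\<^esub> x) = r \<odot>\<^bsub>M\<^esub> ?g x"
      using g_f[of "r \<odot>\<^bsub>M\<^esub> ?g x"] lin_map_smult[OF assms(2)] g_closed f_g by simp
  qed (rule g_closed)
qed

lemma lin_map_inj_onI:
  assumes "module R M" "module R N" and f: "lin_map R M N f"
    and ker: "\<And>x. x \<in> carrier M \<Longrightarrow> f x = \<zero>\<^bsub>N\<^esub> \<Longrightarrow> x = \<zero>\<^bsub>M\<^esub>"
  shows "inj_on f (carrier M)"
proof (rule inj_onI)
  interpret M: module R M by fact
  interpret N: module R N by fact
  fix x x' assume x: "x \<in> carrier M" "x' \<in> carrier M" and "f x = f x'"
  then have "f (x \<ominus>\<^bsub>M\<^esub> x') = \<zero>\<^bsub>N\<^esub>"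
    using lin_map_add[OF f] lin_map_neg[OF assms(1-3)] lin_map_closed[OF f]
    by (simp add: a_minus_def N.r_neg)
  then have "x \<ominus>\<^bsub>M\<^esub> x' = \<zero>\<^bsub>M\<^esub>" using ker x by simp
  then show "x = x'"
    using x M.minus_equality[of x "\<ominus>\<^bsub>M\<^esub> x'"] by (simp add: a_minus_def)
qed

lemma Hom_mod_carrier:
  "f \<in> carrier (Hom_mod R M N) \<longleftrightarrow> lin_map R M N f \<and> f \<in> extensional (carrier M)"
  by (simp add: Hom_mod_def)

lemma Hom_mod_zero: "\<zero>\<^bsub>Hom_mod R M N\<^esub> = (\<lambda>x\<in>carrier M. \<zero>\<^bsub>N\<^esub>)"
  by (simp add: Hom_mod_def)

lemma Hom_mod_add: "f \<oplus>\<^bsub>Hom_mod R M N\<^esub> g = (\<lambda>x\<in>carrier M. f x \<oplus>\<^bsub>N\<^esub> g x)"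
  by (simp add: Hom_mod_def)

lemma Hom_mod_smult: "r \<odot>\<^bsub>Hom_mod R M N\<^esub> f = (\<lambda>x\<in>carrier M. r \<odot>\<^bsub>N\<^esub> f x)"
  by (simp add: Hom_mod_def)

lemma Hom_mod_restrict:
  assumes "module R M" and "lin_map R M N f"
  shows "restrict f (carrier M) \<in> carrier (Hom_mod R M N)"
proof -
  interpret M: module R M by fact
  show ?thesis using assms(2) unfolding Hom_mod_carrier lin_map_def by auto
qed

lemma Hom_mod_pointwise_closed:
  assumes "module R M"
    and f: "f \<in> carrier (Hom_mod R M N)" and g: "g \<in> carrier (Hom_mod R M N)"
    and closed: "\<And>a b. a \<in> carrier N \<Longrightarrow> b \<in> carrier N \<Longrightarrow> \<Phi> a b \<in> carrier N"
    and additive: "\<And>a b c d. \<lbrakk>a \<in> carrier N; b \<in> carrier N; c \<in> carrier N; d \<in> carrier N\<rbrakk>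
       \<Longrightarrow> \<Phi> (a \<oplus>\<^bsub>N\<^esub> c) (b \<oplus>\<^bsub>N\<^esub> d) = \<Phi> a b \<oplus>\<^bsub>N\<^esub> \<Phi> c d"
    and homogeneous: "\<And>r a b. \<lbrakk>r \<in> carrier R; a \<in> carrier N; b \<in> carrier N\<rbrakk>
       \<Longrightarrow> \<Phi> (r \<odot>\<^bsub>N\<^esub> a) (r \<odot>\<^bsub>N\<^esub> b) = r \<odot>\<^bsub>N\<^esub> \<Phi> a b"
  shows "(\<lambda>x\<in>carrier M. \<Phi> (f x) (g x)) \<in> carrier (Hom_mod R M N)"
proof -
  have f: "lin_map R M N f" and g: "lin_map R M N g"
    using f g by (simp_all add: Hom_mod_carrier)
  have "lin_map R M N (\<lambda>x. \<Phi> (f x) (g x))"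
  proof (rule lin_mapI)
    fix x y assume "x \<in> carrier M" "y \<in> carrier M"
    then show "\<Phi> (f (x \<oplus>\<^bsub>M\<^esub> y)) (g (x \<oplus>\<^bsub>M\<^esub> y)) = \<Phi> (f x) (g x) \<oplus>\<^bsub>N\<^esub> \<Phi> (f y) (g y)"
      using additive f g by (simp add: lin_map_closed lin_map_add)
  next
    fix r x assume "r \<in> carrier R" "x \<in> carrier M"
    then show "\<Phi> (f (r \<odot>\<^bsub>M\<^esub> x)) (g (r \<odot>\<^bsub>M\<^esub> x)) = r \<odot>\<^bsub>N\<^esub> \<Phi> (f x) (g x)"
      using homogeneous f g by (simp add: lin_map_closed lin_map_smult)
  qed (use closed f g in \<open>simp add: lin_map_closed\<close>)
  then show ?thesis by (rule Hom_mod_restrict[OF assms(1)])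
qed

lemma module_Hom_mod:
  assumes "module R M" and "module R N"
  shows "module R (Hom_mod R M N)"
proof -
  interpret M: module R M by fact
  interpret N: module R N by fact
  let ?H = "Hom_mod R M N"
  note pointwise_closed = Hom_mod_pointwise_closed[OF assms(1)]
  have closed: "f x \<in> carrier N" if "f \<in> carrier ?H" "x \<in> carrier M" for f x
    using that by (auto simp: Hom_mod_carrier lin_map_def)
  have eta: "(\<lambda>x\<in>carrier M. f x) = f" if "f \<in> carrier ?H" for f
    using that by (simp add: Hom_mod_carrier extensional_restrict)
  show ?thesis
  proof (rule moduleI)
    show "abelian_group ?H"
    proof (rule abelian_groupI)
      fix f g assume "f \<in> carrier ?H" "g \<in> carrier ?H"
      then show "f \<oplus>\<^bsub>?H\<^esub> g \<in> carrier ?H"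
        unfolding Hom_mod_add by (rule pointwise_closed) (simp_all add: N.a_ac N.smult_r_distr)
    next
      show "\<zero>\<^bsub>?H\<^esub> \<in> carrier ?H"
        using Hom_mod_restrict[OF assms(1), where f = "\<lambda>_. \<zero>\<^bsub>N\<^esub>" and N = N]
        by (simp add: Hom_mod_zero lin_mapI)
    next
      fix f g h assume "f \<in> carrier ?H" "g \<in> carrier ?H" "h \<in> carrier ?H"
      then show "f \<oplus>\<^bsub>?H\<^esub> g \<oplus>\<^bsub>?H\<^esub> h = f \<oplus>\<^bsub>?H\<^esub> (g \<oplus>\<^bsub>?H\<^esub> h)"
        by (simp add: Hom_mod_add closed N.a_assoc cong: restrict_cong)
    next
      fix f g assume "f \<in> carrier ?H" "g \<in> carrier ?H"
      then show "f \<oplus>\<^bsub>?H\<^esub> g = g \<oplus>\<^bsub>?H\<^esub> f"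
        by (simp add: Hom_mod_add closed N.a_comm cong: restrict_cong)
    next
      fix f assume "f \<in> carrier ?H"
      then show "\<zero>\<^bsub>?H\<^esub> \<oplus>\<^bsub>?H\<^esub> f = f"
        by (simp add: Hom_mod_add Hom_mod_zero closed eta cong: restrict_cong)
    next
      fix f assume f: "f \<in> carrier ?H"
      show "\<exists>g\<in>carrier ?H. g \<oplus>\<^bsub>?H\<^esub> f = \<zero>\<^bsub>?H\<^esub>"
      proof
        show "(\<lambda>x\<in>carrier M. \<ominus>\<^bsub>N\<^esub> f x) \<in> carrier ?H"
          by (rule pointwise_closed[OF f f]) (simp_all add: N.minus_add N.smult_r_minus)
        show "(\<lambda>x\<in>carrier M. \<ominus>\<^bsub>N\<^esub> f x) \<oplus>\<^bsub>?H\<^esub> f = \<zero>\<^bsub>?H\<^esub>"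
          using f by (simp add: Hom_mod_add Hom_mod_zero closed N.l_neg cong: restrict_cong)
      qed
    qed
  next
    fix r f assume "r \<in> carrier R" "f \<in> carrier ?H"
    then show "r \<odot>\<^bsub>?H\<^esub> f \<in> carrier ?H"
      unfolding Hom_mod_smult
      by (intro pointwise_closed) (simp_all add: N.smult_r_distr N.smult_assoc1[symmetric] M.R.m_comm)
  qed (simp_all add: M.is_cring Hom_mod_add Hom_mod_smult closed eta N.smult_l_distr N.smult_r_distr
         N.smult_assoc1 cong: restrict_cong)
qed

lemma Hom_mod_trivial:
  assumes "module R M" "module R E" and "carrier M = {\<zero>\<^bsub>M\<^esub>}"
  shows "carrier (Hom_mod R M E) = {\<zero>\<^bsub>Hom_mod R M E\<^esub>}"
proof -
  interpret H: module R "Hom_mod R M E" using module_Hom_mod[OF assms(1,2)] .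
  have "f = \<zero>\<^bsub>Hom_mod R M E\<^esub>" if "f \<in> carrier (Hom_mod R M E)" for f
    using that lin_map_zero[OF assms(1,2)] assms(3)
    by (auto simp: Hom_mod_carrier Hom_mod_zero intro: extensionalityI[of _ "carrier M"])
  then show ?thesis using H.zero_closed by blast
qed

section \<open>The injective hull of the residue field separates submodules\<close>

lemma (in ring) ideal_subset_maximalideal:
  assumes "ideal I R" and "\<one> \<notin> I"
  shows "\<exists>M. maximalideal M R \<and> I \<subseteq> M"
proof -
  define A where "A = {J. ideal J R \<and> I \<subseteq> J \<and> \<one> \<notin> J}"
  have "\<exists>M\<in>A. \<forall>J\<in>A. M \<subseteq> J \<longrightarrow> J = M"
  proof (rule subset_Zorn_nonempty)
    show "A \<noteq> {}" using assms A_def by auto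
    fix C assume C: "C \<noteq> {}" "subset.chain A C"
    then have "subset.chain {J. ideal J R} C" unfolding A_def pred_on.chain_def by auto
    from chain_Union_is_ideal[OF this] have "ideal (\<Union>C) R" using C(1) by simp
    then show "\<Union>C \<in> A" using C unfolding A_def pred_on.chain_def by auto
  qed
  then obtain M where M: "M \<in> A" and M_max: "\<And>J. J \<in> A \<Longrightarrow> M \<subseteq> J \<Longrightarrow> J = M" by blast
  have "maximalideal M R"
  proof (rule maximalidealI)
    show "ideal M R" and "carrier R \<noteq> M" using M A_def by auto
  next
    fix J assume J: "ideal J R" "M \<subseteq> J" "J \<subseteq> carrier R"
    show "J = M \<or> J = carrier R"
    proof (cases "\<one> \<in> J")
      case True then show ?thesis using ideal.one_imp_carrier[OF J(1)] by simp
    next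
      case False
      then have "J \<in> A" using J M A_def by auto
      then show ?thesis using J(2) M_max by blast
    qed
  qed
  then show ?thesis using M A_def by auto
qed

lemma noeth_local_ring_ideal_subset:
  assumes "noeth_local_ring R m" and "ideal I R" and "\<one>\<^bsub>R\<^esub> \<notin> I"
  shows "I \<subseteq> m"
  using assms ring.ideal_subset_maximalideal[of R I]
  unfolding noeth_local_ring_def by (metis cring.axioms(1))

lemma submodule_zero_closed: "submodule S R M \<Longrightarrow> \<zero>\<^bsub>M\<^esub> \<in> S"
  by (simp add: submodule_def subgroup.one_closed[of S "add_monoid M", simplified])

lemma zero_submodule:
  assumes "module R M"
  shows "submodule {\<zero>\<^bsub>M\<^esub>} R M"
proof -
  interpret M: module R M by fact
  show ?thesis by (rule M.submoduleI) auto
qed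

lemma image_submodule:
  assumes "module R M" "module R N" and f: "lin_map R M N f"
  shows "submodule (f ` carrier M) R N"
proof -
  interpret M: module R M by fact
  interpret N: module R N by fact
  show ?thesis
  proof (rule N.submoduleI)
    show "f ` carrier M \<subseteq> carrier N" using lin_map_closed[OF f] by auto
    show "\<zero>\<^bsub>N\<^esub> \<in> f ` carrier M"
      using lin_map_zero[OF assms] M.zero_closed by (metis image_eqI)
  next
    fix a assume "a \<in> f ` carrier M"
    then obtain x where "x \<in> carrier M" "a = f x" by blast
    then have "\<ominus>\<^bsub>N\<^esub> a = f (\<ominus>\<^bsub>M\<^esub> x)" using lin_map_neg[OF assms] by simp
    then show "\<ominus>\<^bsub>N\<^esub> a \<in> f ` carrier M" using \<open>x \<in> carrier M\<close> by simp
  next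
    fix a b assume "a \<in> f ` carrier M" "b \<in> f ` carrier M"
    then obtain x x' where "x \<in> carrier M" "a = f x" "x' \<in> carrier M" "b = f x'" by blast
    then have "a \<oplus>\<^bsub>N\<^esub> b = f (x \<oplus>\<^bsub>M\<^esub> x')" using lin_map_add[OF f] by simp
    then show "a \<oplus>\<^bsub>N\<^esub> b \<in> f ` carrier M" using \<open>x \<in> carrier M\<close> \<open>x' \<in> carrier M\<close> by simp
  next
    fix r a assume "r \<in> carrier R" "a \<in> f ` carrier M"
    then obtain x where "x \<in> carrier M" "a = f x" by blast
    then have "r \<odot>\<^bsub>N\<^esub> a = f (r \<odot>\<^bsub>M\<^esub> x)" using lin_map_smult[OF f] \<open>r \<in> carrier R\<close> by simp
    then show "r \<odot>\<^bsub>N\<^esub> a \<in> f ` carrier M" using \<open>x \<in> carrier M\<close> \<open>r \<in> carrier R\<close> by simp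
  qed
qed

definition submodule_colon :: "'r ring \<Rightarrow> ('r, 'a) module \<Rightarrow> 'a set \<Rightarrow> 'a \<Rightarrow> 'r set" where
  "submodule_colon R M S y = {r \<in> carrier R. r \<odot>\<^bsub>M\<^esub> y \<in> S}"

lemma ideal_submodule_colon:
  assumes "module R M" and S: "submodule S R M" and y: "y \<in> carrier M"
  shows "ideal (submodule_colon R M S y) R"
proof -
  interpret M: module R M by fact
  note S_closed = M.submoduleE[OF S]
  show ?thesis
  proof (rule idealI)
    show "ring R" ..
    show "subgroup (submodule_colon R M S y) (add_monoid R)"
    proof (rule M.R.add.subgroupI)
      show "submodule_colon R M S y \<subseteq> carrier R" by (auto simp: submodule_colon_def)
      have "\<zero>\<^bsub>R\<^esub> \<odot>\<^bsub>M\<^esub> y \<in> S"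
        using submodule_zero_closed[OF S] y by simp
      then show "submodule_colon R M S y \<noteq> {}" by (auto simp: submodule_colon_def)
    next
      fix a assume "a \<in> submodule_colon R M S y"
      then show "\<ominus>\<^bsub>R\<^esub> a \<in> submodule_colon R M S y"
        using y S_closed(3) by (simp add: submodule_colon_def M.smult_l_minus)
    next
      fix a b assume "a \<in> submodule_colon R M S y" "b \<in> submodule_colon R M S y"
      then show "a \<oplus>\<^bsub>R\<^esub> b \<in> submodule_colon R M S y"
        using y S_closed(5) by (simp add: submodule_colon_def M.smult_l_distr)
    qed
  next
    fix a x assume a: "a \<in> submodule_colon R M S y" and x: "x \<in> carrier R"
    then have "x \<otimes>\<^bsub>R\<^esub> a \<in> submodule_colon R M S y"
      using y S_closed(4) by (simp add: submodule_colon_def M.smult_assoc1)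
    then show "x \<otimes>\<^bsub>R\<^esub> a \<in> submodule_colon R M S y" "a \<otimes>\<^bsub>R\<^esub> x \<in> submodule_colon R M S y"
      using a x by (auto simp: submodule_colon_def M.R.m_comm)
  qed
qed

definition span_insert :: "'r ring \<Rightarrow> ('r, 'a) module \<Rightarrow> 'a set \<Rightarrow> 'a \<Rightarrow> 'a set" where
  "span_insert R M S y = {z \<oplus>\<^bsub>M\<^esub> r \<odot>\<^bsub>M\<^esub> y | z r. z \<in> S \<and> r \<in> carrier R}"

lemma span_insert_add_eq:
  assumes "module R M" "z \<in> carrier M" "z' \<in> carrier M" "y \<in> carrier M" "r \<in> carrier R" "r' \<in> carrier R"
  shows "(z \<oplus>\<^bsub>M\<^esub> r \<odot>\<^bsub>M\<^esub> y) \<oplus>\<^bsub>M\<^esub> (z' \<oplus>\<^bsub>M\<^esub> r' \<odot>\<^bsub>M\<^esub> y)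
         = (z \<oplus>\<^bsub>M\<^esub> z') \<oplus>\<^bsub>M\<^esub> (r \<oplus>\<^bsub>R\<^esub> r') \<odot>\<^bsub>M\<^esub> y"
proof -
  interpret M: module R M by fact
  show ?thesis using assms(2-) by (simp add: M.smult_l_distr M.a_ac)
qed

lemma span_insert_smult_eq:
  assumes "module R M" "z \<in> carrier M" "y \<in> carrier M" "c \<in> carrier R" "r \<in> carrier R"
  shows "c \<odot>\<^bsub>M\<^esub> (z \<oplus>\<^bsub>M\<^esub> r \<odot>\<^bsub>M\<^esub> y) = c \<odot>\<^bsub>M\<^esub> z \<oplus>\<^bsub>M\<^esub> (c \<otimes>\<^bsub>R\<^esub> r) \<odot>\<^bsub>M\<^esub> y"
proof -
  interpret M: module R M by fact
  show ?thesis using assms(2-) by (simp add: M.smult_r_distr M.smult_assoc1)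
qed

lemma submodule_span_insert:
  assumes "module R M" and S: "submodule S R M" and y: "y \<in> carrier M"
  shows "submodule (span_insert R M S y) R M"
proof -
  interpret M: module R M by fact
  note S_closed = M.submoduleE[OF S]
  have in_M: "z \<in> S \<Longrightarrow> z \<in> carrier M" for z using S_closed(1) by blast
  show ?thesis
  proof (rule M.submoduleI)
    show "span_insert R M S y \<subseteq> carrier M"
      using y in_M by (auto simp: span_insert_def)
    show "\<zero>\<^bsub>M\<^esub> \<in> span_insert R M S y"
      unfolding span_insert_def using submodule_zero_closed[OF S] y
      by (auto intro!: exI[of _ "\<zero>\<^bsub>M\<^esub>"] exI[of _ "\<zero>\<^bsub>R\<^esub>"])
  next
    fix a assume "a \<in> span_insert R M S y"
    then obtain z r where zr: "z \<in> S" "r \<in> carrier R" "a = z \<oplus>\<^bsub>M\<^esub> r \<odot>\<^bsub>M\<^esub> y"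
      by (auto simp: span_insert_def)
    then have "\<ominus>\<^bsub>M\<^esub> a = \<ominus>\<^bsub>M\<^esub> z \<oplus>\<^bsub>M\<^esub> (\<ominus>\<^bsub>R\<^esub> r) \<odot>\<^bsub>M\<^esub> y"
      using y in_M by (simp add: M.minus_add M.smult_l_minus)
    then show "\<ominus>\<^bsub>M\<^esub> a \<in> span_insert R M S y"
      using zr S_closed(3) by (auto simp: span_insert_def)
  next
    fix a b assume "a \<in> span_insert R M S y" "b \<in> span_insert R M S y"
    then obtain z r z' r' where zr: "z \<in> S" "r \<in> carrier R" "a = z \<oplus>\<^bsub>M\<^esub> r \<odot>\<^bsub>M\<^esub> y"
      and zr': "z' \<in> S" "r' \<in> carrier R" "b = z' \<oplus>\<^bsub>M\<^esub> r' \<odot>\<^bsub>M\<^esub> y"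
      by (auto simp: span_insert_def)
    then have "a \<oplus>\<^bsub>M\<^esub> b = (z \<oplus>\<^bsub>M\<^esub> z') \<oplus>\<^bsub>M\<^esub> (r \<oplus>\<^bsub>R\<^esub> r') \<odot>\<^bsub>M\<^esub> y"
      using span_insert_add_eq[OF assms(1)] y in_M by simp
    then show "a \<oplus>\<^bsub>M\<^esub> b \<in> span_insert R M S y"
      using zr zr' S_closed(5) by (auto simp: span_insert_def)
  next
    fix c a assume c: "c \<in> carrier R" and "a \<in> span_insert R M S y"
    then obtain z r where zr: "z \<in> S" "r \<in> carrier R" "a = z \<oplus>\<^bsub>M\<^esub> r \<odot>\<^bsub>M\<^esub> y"
      by (auto simp: span_insert_def)
    then have "c \<odot>\<^bsub>M\<^esub> a = c \<odot>\<^bsub>M\<^esub> z \<oplus>\<^bsub>M\<^esub> (c \<otimes>\<^bsub>R\<^esub> r) \<odot>\<^bsub>M\<^esub> y"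
      using span_insert_smult_eq[OF assms(1)] c y in_M by simp
    then show "c \<odot>\<^bsub>M\<^esub> a \<in> span_insert R M S y"
      using zr c S_closed(4) by (auto simp: span_insert_def)
  qed
qed

lemma span_insert_coeff_diff:
  assumes "module R M" and S: "submodule S R M" and y: "y \<in> carrier M"
    and z: "z \<in> S" "z' \<in> S" and r: "r \<in> carrier R" "s \<in> carrier R"
    and eq: "z \<oplus>\<^bsub>M\<^esub> r \<odot>\<^bsub>M\<^esub> y = z' \<oplus>\<^bsub>M\<^esub> s \<odot>\<^bsub>M\<^esub> y"
  shows "r \<ominus>\<^bsub>R\<^esub> s \<in> submodule_colon R M S y"
proof -
  interpret M: module R M by fact
  note S_closed = M.submoduleE[OF S]
  have zM: "z \<in> carrier M" "z' \<in> carrier M" using z S_closed(1) by auto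
  have ry: "r \<odot>\<^bsub>M\<^esub> y = \<ominus>\<^bsub>M\<^esub> z \<oplus>\<^bsub>M\<^esub> (z' \<oplus>\<^bsub>M\<^esub> s \<odot>\<^bsub>M\<^esub> y)"
    using M.add.inv_solve_left[of "r \<odot>\<^bsub>M\<^esub> y" z "z' \<oplus>\<^bsub>M\<^esub> s \<odot>\<^bsub>M\<^esub> y"] eq zM r y by simp
  have "(r \<ominus>\<^bsub>R\<^esub> s) \<odot>\<^bsub>M\<^esub> y = r \<odot>\<^bsub>M\<^esub> y \<oplus>\<^bsub>M\<^esub> \<ominus>\<^bsub>M\<^esub> (s \<odot>\<^bsub>M\<^esub> y)"
    using r y by (simp add: a_minus_def M.smult_l_distr M.smult_l_minus)
  also have "\<dots> = \<ominus>\<^bsub>M\<^esub> z \<oplus>\<^bsub>M\<^esub> z'"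
    unfolding ry using zM r y by (simp add: M.a_assoc M.r_neg)
  finally show ?thesis
    using r z S_closed(3,5) by (simp add: submodule_colon_def)
qed

definition span_insert_map ::
    "'r ring \<Rightarrow> ('r, 'a) module \<Rightarrow> 'a set \<Rightarrow> 'a \<Rightarrow> ('r, 'e) module \<Rightarrow> 'e \<Rightarrow> 'a \<Rightarrow> 'e" where
  "span_insert_map R M S y E e w =
     (SOME v. \<exists>z\<in>S. \<exists>r\<in>carrier R. w = z \<oplus>\<^bsub>M\<^esub> r \<odot>\<^bsub>M\<^esub> y \<and> v = r \<odot>\<^bsub>E\<^esub> e)"

lemma span_insert_map_eq:
  assumes "module R M" "module R E" and S: "submodule S R M" and y: "y \<in> carrier M"
    and e: "e \<in> carrier E" and ann: "\<And>r. r \<in> submodule_colon R M S y \<Longrightarrow> r \<odot>\<^bsub>E\<^esub> e = \<zero>\<^bsub>E\<^esub>"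
    and z: "z \<in> S" and r: "r \<in> carrier R"
  shows "span_insert_map R M S y E e (z \<oplus>\<^bsub>M\<^esub> r \<odot>\<^bsub>M\<^esub> y) = r \<odot>\<^bsub>E\<^esub> e"
proof -
  interpret E: module R E by fact
  have "\<exists>v. \<exists>z'\<in>S. \<exists>r'\<in>carrier R. z \<oplus>\<^bsub>M\<^esub> r \<odot>\<^bsub>M\<^esub> y = z' \<oplus>\<^bsub>M\<^esub> r' \<odot>\<^bsub>M\<^esub> y \<and> v = r' \<odot>\<^bsub>E\<^esub> e"
    using z r by blast
  from someI_ex[OF this] obtain z' s where z': "z' \<in> S" and s: "s \<in> carrier R"
    and eq: "z \<oplus>\<^bsub>M\<^esub> r \<odot>\<^bsub>M\<^esub> y = z' \<oplus>\<^bsub>M\<^esub> s \<odot>\<^bsub>M\<^esub> y"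
    and val: "span_insert_map R M S y E e (z \<oplus>\<^bsub>M\<^esub> r \<odot>\<^bsub>M\<^esub> y) = s \<odot>\<^bsub>E\<^esub> e"
    unfolding span_insert_map_def by blast
  have "(r \<ominus>\<^bsub>R\<^esub> s) \<odot>\<^bsub>E\<^esub> e = \<zero>\<^bsub>E\<^esub>"
    using ann span_insert_coeff_diff[OF assms(1) S y z z' r s eq] by blast
  then have "r \<odot>\<^bsub>E\<^esub> e \<oplus>\<^bsub>E\<^esub> \<ominus>\<^bsub>E\<^esub> (s \<odot>\<^bsub>E\<^esub> e) = \<zero>\<^bsub>E\<^esub>"
    using r s e by (simp add: a_minus_def E.smult_l_distr E.smult_l_minus)
  from E.minus_equality[OF this] show ?thesis using val r s e by simp
qed

lemma lin_map_span_insert_map: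
  assumes "module R M" "module R E" and S: "submodule S R M" and y: "y \<in> carrier M"
    and e: "e \<in> carrier E" and ann: "\<And>r. r \<in> submodule_colon R M S y \<Longrightarrow> r \<odot>\<^bsub>E\<^esub> e = \<zero>\<^bsub>E\<^esub>"
  shows "lin_map R (M\<lparr>carrier := span_insert R M S y\<rparr>) E (span_insert_map R M S y E e)"
proof -
  interpret M: module R M by fact
  interpret E: module R E by fact
  note h = span_insert_map_eq[OF assms]
  note S_closed = M.submoduleE[OF S]
  have in_M: "z \<in> S \<Longrightarrow> z \<in> carrier M" for z using S_closed(1) by blast
  show ?thesis
  proof (rule lin_mapI)
    fix w assume "w \<in> carrier (M\<lparr>carrier := span_insert R M S y\<rparr>)"
    then show "span_insert_map R M S y E e w \<in> carrier E" using h e by (auto simp: span_insert_def)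
  next
    fix a b
    assume "a \<in> carrier (M\<lparr>carrier := span_insert R M S y\<rparr>)"
      and "b \<in> carrier (M\<lparr>carrier := span_insert R M S y\<rparr>)"
    then obtain z r z' r' where "z \<in> S" "r \<in> carrier R" "a = z \<oplus>\<^bsub>M\<^esub> r \<odot>\<^bsub>M\<^esub> y"
      and "z' \<in> S" "r' \<in> carrier R" "b = z' \<oplus>\<^bsub>M\<^esub> r' \<odot>\<^bsub>M\<^esub> y"
      by (auto simp: span_insert_def)
    then show "span_insert_map R M S y E e (a \<oplus>\<^bsub>M\<lparr>carrier := span_insert R M S y\<rparr>\<^esub> b)
        = span_insert_map R M S y E e a \<oplus>\<^bsub>E\<^esub> span_insert_map R M S y E e b"
      using span_insert_add_eq[OF assms(1)] in_M y S_closed(5) h e by (simp add: E.smult_l_distr)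
  next
    fix c a
    assume c: "c \<in> carrier R" and "a \<in> carrier (M\<lparr>carrier := span_insert R M S y\<rparr>)"
    then obtain z r where "z \<in> S" "r \<in> carrier R" "a = z \<oplus>\<^bsub>M\<^esub> r \<odot>\<^bsub>M\<^esub> y"
      by (auto simp: span_insert_def)
    then show "span_insert_map R M S y E e (c \<odot>\<^bsub>M\<lparr>carrier := span_insert R M S y\<rparr>\<^esub> a)
        = c \<odot>\<^bsub>E\<^esub> span_insert_map R M S y E e a"
      using span_insert_smult_eq[OF assms(1)] c in_M y S_closed(4) h e by (simp add: E.smult_assoc1)
  qed
qed

lemma essential_ext_of_residue_module: "essential_ext_of_residue R m E \<Longrightarrow> module R E"
  unfolding essential_ext_of_residue_def by blast

lemma residue_generator:
  assumes "noeth_local_ring R m" and ess: "essential_ext_of_residue R m E"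
  obtains e where "e \<in> carrier E" "e \<noteq> \<zero>\<^bsub>E\<^esub>"
    and "\<And>r. r \<in> carrier R \<Longrightarrow> r \<odot>\<^bsub>E\<^esub> e = \<zero>\<^bsub>E\<^esub> \<longleftrightarrow> r \<in> m"
proof -
  interpret E: module R E using essential_ext_of_residue_module[OF ess] .
  obtain e where e: "e \<in> carrier E" and ann: "{r \<in> carrier R. r \<odot>\<^bsub>E\<^esub> e = \<zero>\<^bsub>E\<^esub>} = m"
    using ess unfolding essential_ext_of_residue_def by blast
  have ann_iff: "r \<odot>\<^bsub>E\<^esub> e = \<zero>\<^bsub>E\<^esub> \<longleftrightarrow> r \<in> m" if "r \<in> carrier R" for r
    using that ann by blast
  have "maximalideal m R" using assms(1) by (simp add: noeth_local_ring_def)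
  then have "\<one>\<^bsub>R\<^esub> \<notin> m"
    using ideal.one_imp_carrier[OF maximalideal.axioms(1)] maximalideal.I_notcarr by metis
  then have "e \<noteq> \<zero>\<^bsub>E\<^esub>" using ann_iff[OF E.R.one_closed] e by auto
  then show ?thesis using that e ann_iff by blast
qed

lemma Hom_mod_separates_submodule:
  fixes R :: "'r ring" and E :: "('r, 'e) module" and M :: "('r, 'c) module"
  assumes local: "noeth_local_ring R m" and ess: "essential_ext_of_residue R m E"
    and inj: "injective_wrt TYPE('c) R E" and "module R M"
    and S: "submodule S R M" and y: "y \<in> carrier M" "y \<notin> S"
  shows "\<exists>g\<in>carrier (Hom_mod R M E). (\<forall>x\<in>S. g x = \<zero>\<^bsub>E\<^esub>) \<and> g y \<noteq> \<zero>\<^bsub>E\<^esub>"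
proof -
  interpret M: module R M by fact
  have E: "module R E" using essential_ext_of_residue_module[OF ess] .
  obtain e where e: "e \<in> carrier E" "e \<noteq> \<zero>\<^bsub>E\<^esub>"
    and ann: "\<And>r. r \<in> carrier R \<Longrightarrow> r \<odot>\<^bsub>E\<^esub> e = \<zero>\<^bsub>E\<^esub> \<longleftrightarrow> r \<in> m"
    using residue_generator[OF local ess] by blast
  have "\<one>\<^bsub>R\<^esub> \<notin> submodule_colon R M S y" using y by (simp add: submodule_colon_def)
  then have "submodule_colon R M S y \<subseteq> m"
    using noeth_local_ring_ideal_subset[OF local ideal_submodule_colon[OF assms(4) S y(1)]] by blast
  then have colon_ann: "r \<odot>\<^bsub>E\<^esub> e = \<zero>\<^bsub>E\<^esub>" if "r \<in> submodule_colon R M S y" for r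
    using that ann by (auto simp: submodule_colon_def)
  have h_lin: "lin_map R (M\<lparr>carrier := span_insert R M S y\<rparr>) E (span_insert_map R M S y E e)"
    using lin_map_span_insert_map[OF assms(4) E S y(1) e(1)] colon_ann by blast
  have h: "span_insert_map R M S y E e (z \<oplus>\<^bsub>M\<^esub> r \<odot>\<^bsub>M\<^esub> y) = r \<odot>\<^bsub>E\<^esub> e"
    if "z \<in> S" "r \<in> carrier R" for z r
    using span_insert_map_eq[OF assms(4) E S y(1) e(1)] colon_ann that by blast
  obtain g where g: "lin_map R M E g"
    and g_h: "\<And>x. x \<in> span_insert R M S y \<Longrightarrow> g x = span_insert_map R M S y E e x"
    using inj assms(4) submodule_span_insert[OF assms(4) S y(1)] h_lin
    unfolding injective_wrt_def by blast
  have "g x = \<zero>\<^bsub>E\<^esub>" if x: "x \<in> S" for x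
  proof -
    have x_eq: "x = x \<oplus>\<^bsub>M\<^esub> \<zero>\<^bsub>R\<^esub> \<odot>\<^bsub>M\<^esub> y" using x y M.submoduleE(1)[OF S] by auto
    then have "x \<in> span_insert R M S y" unfolding span_insert_def using x by blast
    then have "g x = \<zero>\<^bsub>R\<^esub> \<odot>\<^bsub>E\<^esub> e" using g_h h[OF x M.R.zero_closed] x_eq by metis
    then show ?thesis using e(1) by (simp add: module.smult_l_null[OF E])
  qed
  moreover have "g y = e"
  proof -
    have y_eq: "y = \<zero>\<^bsub>M\<^esub> \<oplus>\<^bsub>M\<^esub> \<one>\<^bsub>R\<^esub> \<odot>\<^bsub>M\<^esub> y" using y by simp
    then have "y \<in> span_insert R M S y" unfolding span_insert_def using submodule_zero_closed[OF S] by blast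
    then have "g y = \<one>\<^bsub>R\<^esub> \<odot>\<^bsub>E\<^esub> e"
      using g_h h[OF submodule_zero_closed[OF S] M.R.one_closed] y_eq by metis
    then show ?thesis using e(1) by (simp add: module.smult_one[OF E])
  qed
  ultimately show ?thesis
    using Hom_mod_restrict[OF assms(4) g] e(2) y(1) M.submoduleE(1)[OF S]
    by (intro bexI[of _ "restrict g (carrier M)"]) auto
qed

section \<open>Duals of endomorphisms\<close>

definition dual_map :: "('r, 'a) module \<Rightarrow> ('a \<Rightarrow> 'b) \<Rightarrow> ('b \<Rightarrow> 'e) \<Rightarrow> ('a \<Rightarrow> 'e)" where
  "dual_map M f g = (\<lambda>x\<in>carrier M. g (f x))"

lemma lin_map_dual_map:
  assumes "module R M" and f: "lin_map R M N f"
  shows "lin_map R (Hom_mod R N E) (Hom_mod R M E) (dual_map M f)"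
proof (rule lin_mapI)
  fix g assume "g \<in> carrier (Hom_mod R N E)"
  then have "lin_map R M E (g \<circ> f)" using f lin_map_comp by (auto simp: Hom_mod_carrier)
  from Hom_mod_restrict[OF assms(1) this] show "dual_map M f g \<in> carrier (Hom_mod R M E)"
    by (simp add: dual_map_def comp_def)
next
  fix g h assume "g \<in> carrier (Hom_mod R N E)" "h \<in> carrier (Hom_mod R N E)"
  then show "dual_map M f (g \<oplus>\<^bsub>Hom_mod R N E\<^esub> h)
      = dual_map M f g \<oplus>\<^bsub>Hom_mod R M E\<^esub> dual_map M f h"
    using lin_map_closed[OF f] by (auto simp: dual_map_def Hom_mod_add)
next
  fix r g assume "r \<in> carrier R" "g \<in> carrier (Hom_mod R N E)"
  then show "dual_map M f (r \<odot>\<^bsub>Hom_mod R N E\<^esub> g) = r \<odot>\<^bsub>Hom_mod R M E\<^esub> dual_map M f g"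
    using lin_map_closed[OF f] by (auto simp: dual_map_def Hom_mod_smult)
qed

lemma dual_map_nonzero:
  fixes R :: "'r ring" and E :: "('r, 'e) module" and N :: "('r, 'c) module"
  assumes local: "noeth_local_ring R m" and ess: "essential_ext_of_residue R m E"
    and inj: "injective_wrt TYPE('c) R E" and "module R N"
    and f: "lin_map R M N f" and x: "x \<in> carrier M" "f x \<noteq> \<zero>\<^bsub>N\<^esub>"
  shows "\<exists>g\<in>carrier (Hom_mod R N E). dual_map M f g \<noteq> \<zero>\<^bsub>Hom_mod R M E\<^esub>"
proof -
  obtain g where "g \<in> carrier (Hom_mod R N E)" "g (f x) \<noteq> \<zero>\<^bsub>E\<^esub>"
    using Hom_mod_separates_submodule[OF local ess inj assms(4) zero_submodule[OF assms(4)]] x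
      lin_map_closed[OF f x(1)] by blast
  moreover have "dual_map M f g x = g (f x)" "\<zero>\<^bsub>Hom_mod R M E\<^esub> x = \<zero>\<^bsub>E\<^esub>"
    using x by (simp_all add: dual_map_def Hom_mod_zero)
  ultimately show ?thesis by metis
qed

lemma strongly_coprime_if_strongly_prime_dual:
  fixes R :: "'r ring" and E :: "('r, 'e) module" and M :: "('r, 'c) module"
  assumes local: "noeth_local_ring R m" and ess: "essential_ext_of_residue R m E"
    and inj: "injective_wrt TYPE('c) R E" and "module R M"
    and prime: "strongly_prime R (Hom_mod R M E)"
  shows "strongly_coprime R M"
proof -
  have E: "module R E" using essential_ext_of_residue_module[OF ess] .
  let ?H = "Hom_mod R M E"
  interpret H: module R ?H using module_Hom_mod[OF assms(4) E] .
  have "carrier M \<noteq> {\<zero>\<^bsub>M\<^esub>}"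
    using prime Hom_mod_trivial[OF assms(4) E] unfolding strongly_prime_def by blast
  moreover have "f ` carrier M = carrier M"
    if f: "lin_map R M M f" and x: "x \<in> carrier M" "f x \<noteq> \<zero>\<^bsub>M\<^esub>" for f x
  proof (rule ccontr)
    assume "f ` carrier M \<noteq> carrier M"
    then obtain y where y: "y \<in> carrier M" "y \<notin> f ` carrier M"
      using lin_map_closed[OF f] by blast
    obtain g where g: "g \<in> carrier ?H" "\<forall>z\<in>f ` carrier M. g z = \<zero>\<^bsub>E\<^esub>" "g y \<noteq> \<zero>\<^bsub>E\<^esub>"
      using Hom_mod_separates_submodule[OF local ess inj assms(4) image_submodule[OF assms(4) assms(4) f] y] by blast
    have "inj_on (dual_map M f) (carrier ?H)"
      using prime lin_map_dual_map[OF assms(4) f] dual_map_nonzero[OF local ess inj assms(4) f x]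
      unfolding strongly_prime_def by blast
    moreover have "dual_map M f g = dual_map M f \<zero>\<^bsub>?H\<^esub>"
      using g(2) lin_map_closed[OF f] by (auto simp: dual_map_def Hom_mod_zero)
    ultimately have "g = \<zero>\<^bsub>?H\<^esub>"
      using g(1) H.zero_closed by (auto dest: inj_onD)
    then show False using g(3) y(1) by (simp add: Hom_mod_zero)
  qed
  ultimately show ?thesis unfolding strongly_coprime_def by blast
qed

lemma strongly_prime_if_strongly_coprime_dual:
  fixes R :: "'r ring" and E :: "('r, 'e) module" and M :: "('r, 'c) module"
  assumes local: "noeth_local_ring R m" and ess: "essential_ext_of_residue R m E"
    and inj: "injective_wrt TYPE('c) R E" and "module R M"
    and coprime: "strongly_coprime R (Hom_mod R M E)"
  shows "strongly_prime R M"
proof -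
  have E: "module R E" using essential_ext_of_residue_module[OF ess] .
  let ?H = "Hom_mod R M E"
  have "carrier M \<noteq> {\<zero>\<^bsub>M\<^esub>}"
    using coprime Hom_mod_trivial[OF assms(4) E] unfolding strongly_coprime_def by blast
  moreover have "inj_on f (carrier M)"
    if f: "lin_map R M M f" and x: "x \<in> carrier M" "f x \<noteq> \<zero>\<^bsub>M\<^esub>" for f x
  proof (rule lin_map_inj_onI[OF assms(4) assms(4) f], rule ccontr)
    fix d assume d: "d \<in> carrier M" "f d = \<zero>\<^bsub>M\<^esub>" "d \<noteq> \<zero>\<^bsub>M\<^esub>"
    then obtain g where g: "g \<in> carrier ?H" "g d \<noteq> \<zero>\<^bsub>E\<^esub>"
      using Hom_mod_separates_submodule[OF local ess inj assms(4) zero_submodule[OF assms(4)]] by blast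
    have "dual_map M f ` carrier ?H = carrier ?H"
      using coprime lin_map_dual_map[OF assms(4) f] dual_map_nonzero[OF local ess inj assms(4) f x]
      unfolding strongly_coprime_def by blast
    then obtain h where h: "h \<in> carrier ?H" "g = dual_map M f h" using g(1) by blast
    then have "g d = h \<zero>\<^bsub>M\<^esub>" using d by (simp add: dual_map_def)
    also have "\<dots> = \<zero>\<^bsub>E\<^esub>" using h(1) lin_map_zero[OF assms(4) E] by (simp add: Hom_mod_carrier)
    finally show False using g(2) by contradiction
  qed
  ultimately show ?thesis unfolding strongly_prime_def by blast
qed

section \<open>Transport along isomorphisms\<close>

lemma conjugate_endomorphism:
  assumes "module R M" "module R N" and \<phi>: "lin_map R M N \<phi>"
    and bij: "bij_betw \<phi> (carrier M) (carrier N)"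
    and f: "lin_map R N N f" and x: "x \<in> carrier N" "f x \<noteq> \<zero>\<^bsub>N\<^esub>"
  defines "\<psi> \<equiv> inv_into (carrier M) \<phi>"
  shows "lin_map R M M (\<psi> \<circ> f \<circ> \<phi>)" and "\<psi> x \<in> carrier M" and "(\<psi> \<circ> f \<circ> \<phi>) (\<psi> x) \<noteq> \<zero>\<^bsub>M\<^esub>"
proof -
  have \<psi>: "lin_map R N M \<psi>" unfolding \<psi>_def by (rule lin_map_inv_into[OF assms(1) \<phi> bij])
  show "lin_map R M M (\<psi> \<circ> f \<circ> \<phi>)" by (rule lin_map_comp[OF \<phi> lin_map_comp[OF f \<psi>]])
  show "\<psi> x \<in> carrier M" by (rule lin_map_closed[OF \<psi> x(1)])
  have \<phi>\<psi>: "\<phi> (\<psi> y) = y" if "y \<in> carrier N" for y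
    using that bij by (simp add: \<psi>_def bij_betw_def f_inv_into_f)
  have "\<phi> (\<psi> (f x)) \<noteq> \<phi> \<zero>\<^bsub>M\<^esub>"
    using \<phi>\<psi> lin_map_closed[OF f x(1)] x(2) lin_map_zero[OF assms(1,2) \<phi>] by simp
  then show "(\<psi> \<circ> f \<circ> \<phi>) (\<psi> x) \<noteq> \<zero>\<^bsub>M\<^esub>" using \<phi>\<psi> x(1) by auto
qed

lemma carrier_nontrivial_iso:
  assumes "module R M" "module R N" and \<phi>: "lin_map R M N \<phi>"
    and bij: "bij_betw \<phi> (carrier M) (carrier N)" and "carrier M \<noteq> {\<zero>\<^bsub>M\<^esub>}"
  shows "carrier N \<noteq> {\<zero>\<^bsub>N\<^esub>}"
proof
  interpret M: module R M by fact
  assume "carrier N = {\<zero>\<^bsub>N\<^esub>}"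
  then have "\<phi> x = \<phi> \<zero>\<^bsub>M\<^esub>" if "x \<in> carrier M" for x
    using that lin_map_closed[OF \<phi>] lin_map_zero[OF assms(1,2) \<phi>] by auto
  then have "carrier M = {\<zero>\<^bsub>M\<^esub>}"
    using bij M.zero_closed unfolding bij_betw_def inj_on_def by blast
  with assms(5) show False ..
qed

lemma strongly_prime_iso:
  assumes "module R M" "module R N" and \<phi>: "lin_map R M N \<phi>"
    and bij: "bij_betw \<phi> (carrier M) (carrier N)" and prime: "strongly_prime R M"
  shows "strongly_prime R N"
proof -
  define \<psi> where "\<psi> = inv_into (carrier M) \<phi>"
  have \<phi>\<psi>: "\<phi> (\<psi> y) = y" if "y \<in> carrier N" for y
    using that bij by (simp add: \<psi>_def bij_betw_def f_inv_into_f)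
  have "inj_on f (carrier N)" if f: "lin_map R N N f" and x: "x \<in> carrier N" "f x \<noteq> \<zero>\<^bsub>N\<^esub>" for f x
  proof (rule inj_onI)
    note conj = conjugate_endomorphism[OF assms(1-4) f x, folded \<psi>_def]
    have inj_conj: "inj_on (\<psi> \<circ> f \<circ> \<phi>) (carrier M)"
      using prime conj unfolding strongly_prime_def by blast
    fix a b assume ab: "a \<in> carrier N" "b \<in> carrier N" "f a = f b"
    have \<psi>_closed: "\<psi> a \<in> carrier M" "\<psi> b \<in> carrier M"
      using ab lin_map_closed[OF lin_map_inv_into[OF assms(1) \<phi> bij]] by (simp_all add: \<psi>_def)
    have "(\<psi> \<circ> f \<circ> \<phi>) (\<psi> a) = (\<psi> \<circ> f \<circ> \<phi>) (\<psi> b)"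
      using ab by (simp add: \<phi>\<psi>)
    then have "\<psi> a = \<psi> b" using inj_onD[OF inj_conj _ \<psi>_closed] by blast
    then show "a = b" using \<phi>\<psi>[OF ab(1)] \<phi>\<psi>[OF ab(2)] by metis
  qed
  then show ?thesis
    using prime carrier_nontrivial_iso[OF assms(1-4)] unfolding strongly_prime_def by blast
qed

lemma strongly_coprime_iso:
  assumes "module R M" "module R N" and \<phi>: "lin_map R M N \<phi>"
    and bij: "bij_betw \<phi> (carrier M) (carrier N)" and coprime: "strongly_coprime R M"
  shows "strongly_coprime R N"
proof -
  define \<psi> where "\<psi> = inv_into (carrier M) \<phi>"
  have \<phi>\<psi>: "\<phi> (\<psi> y) = y" if "y \<in> carrier N" for y
    using that bij by (simp add: \<psi>_def bij_betw_def f_inv_into_f)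
  have "f ` carrier N = carrier N"
    if f: "lin_map R N N f" and x: "x \<in> carrier N" "f x \<noteq> \<zero>\<^bsub>N\<^esub>" for f x
  proof
    show "f ` carrier N \<subseteq> carrier N" using lin_map_closed[OF f] by blast
    note conj = conjugate_endomorphism[OF assms(1-4) f x, folded \<psi>_def]
    have surj_conj: "(\<psi> \<circ> f \<circ> \<phi>) ` carrier M = carrier M"
      using coprime conj unfolding strongly_coprime_def by blast
    show "carrier N \<subseteq> f ` carrier N"
    proof
      fix y assume y: "y \<in> carrier N"
      then have "\<psi> y \<in> carrier M"
        using lin_map_closed[OF lin_map_inv_into[OF assms(1) \<phi> bij]] by (simp add: \<psi>_def)
      then have "\<psi> y \<in> (\<psi> \<circ> f \<circ> \<phi>) ` carrier M" by (simp only: surj_conj)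
      then obtain z where z: "z \<in> carrier M" "\<psi> y = \<psi> (f (\<phi> z))" by auto
      then have "\<phi> (\<psi> y) = \<phi> (\<psi> (f (\<phi> z)))" by simp
      then have "y = f (\<phi> z)"
        using \<phi>\<psi>[OF y] \<phi>\<psi>[OF lin_map_closed[OF f lin_map_closed[OF \<phi> z(1)]]] by simp
      then show "y \<in> f ` carrier N" using lin_map_closed[OF \<phi> z(1)] by blast
    qed
  qed
  then show ?thesis
    using coprime carrier_nontrivial_iso[OF assms(1-4)] unfolding strongly_coprime_def by blast
qed

theorem lemma2p2:
  fixes R :: "'r ring" and m :: "'r set"
    and E :: "('r, 'e) module" and N :: "('r, 'n) module"
  assumes "noeth_local_ring R m"
    and "essential_ext_of_residue R m E"
    and "injective_wrt TYPE('n) R E"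
    and "injective_wrt TYPE('n \<Rightarrow> 'e) R E"
    and "module R N"
  shows "(strongly_prime R (Hom_mod R N E) \<longrightarrow> strongly_coprime R N)
       \<and> (strongly_coprime R (Hom_mod R N E) \<longrightarrow> strongly_prime R N)
       \<and> (reflexive_wrt R E N \<longrightarrow>
            (strongly_coprime R N \<longrightarrow> strongly_prime R (Hom_mod R N E))
          \<and> (strongly_prime R N \<longrightarrow> strongly_coprime R (Hom_mod R N E)))"
proof -
  note local = assms(1) and ess = assms(2)
  have E: "module R E" using essential_ext_of_residue_module[OF ess] .
  have N_dual: "module R (Hom_mod R N E)" by (rule module_Hom_mod[OF assms(5) E])
  have N_bidual: "module R (Hom_mod R (Hom_mod R N E) E)" by (rule module_Hom_mod[OF N_dual E])
  have converse:
    "(strongly_coprime R N \<longrightarrow> strongly_prime R (Hom_mod R N E))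
     \<and> (strongly_prime R N \<longrightarrow> strongly_coprime R (Hom_mod R N E))"
    if "reflexive_wrt R E N"
  proof -
    from that have eval: "lin_map R N (Hom_mod R (Hom_mod R N E) E) (eval_map R E N)"
      "bij_betw (eval_map R E N) (carrier N) (carrier (Hom_mod R (Hom_mod R N E) E))"
      unfolding reflexive_wrt_def by auto
    show ?thesis
      using strongly_coprime_iso[OF assms(5) N_bidual eval] strongly_prime_iso[OF assms(5) N_bidual eval]
        strongly_prime_if_strongly_coprime_dual[OF local ess assms(4) N_dual]
        strongly_coprime_if_strongly_prime_dual[OF local ess assms(4) N_dual]
      by blast
  qed
  show ?thesis
    using strongly_coprime_if_strongly_prime_dual[OF local ess assms(3,5)]
      strongly_prime_if_strongly_coprime_dual[OF local ess assms(3,5)] converse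
    by blast
qed

end
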